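(* Let $h$ be a linear functional and $\lambda\in\mathbb R$ such that $\operatorname{conv}(\frac12(d+\mathcal W))$ lies in the open half-space $\{\bar x:h(\bar x)<\lambda\}$. Then there is at most one element of $\mathcal C$ in $\{\bar x:h(\bar x)>\lambda\}$, and such an element is a null vertex of $\operatorname{conv}(\mathcal C)$. Consequently any element of $\mathcal C$ outside $\operatorname{conv}(\frac12(d+\mathcal W))$ is a null vertex of $\operatorname{conv}(\mathcal C)$.
   Context: Setting: $G$ compact Lie group, $K\subset G$ closed, $G/K$ connected almost effective, isotropy representation $\mathfrak p=\mathfrak p_1\oplus\cdots\oplus\mathfrak p_r$ ($r\ge2$) with pairwise inequivalent $\mathbb R$-irreducible summands, $d_i=\dim\mathfrak p_i$, $d=(d_1,\dots,d_r)$, $n=\sum d_i$. The scalar curvature of the metric $e^{q_i}Q$ on $\mathfrak p_i$ is $S(q)=\sum_{w\in\mathcal W}A_we^{w\cdot q}$, $\mathcal W\subset\mathbb Z^r$ finite, $A_w\ne0$, each $w$ of type I (one entry $-1$), type II (one entry $1$, two entries $-1$) or type III (one entry $1$, one entry $-2$), other entries $0$; $A_w>0$ for type I and $<0$ otherwise. Assume $\dim\operatorname{conv}(\mathcal W)=r-1$. $J$ is the symmetric bilinear form on $\mathbb R^r$ with $J(p,p)=\frac1{n-1}(\sum p_i)^2-\sum p_i^2/d_i$; a vector $\bar x$ is null if $J(\bar x,\bar x)=0$. $u=\sum_{\bar c\in\mathcal C}F_{\bar c}e^{\bar c\cdot q}$ ($\mathcal C$ finite, $F_{\bar c}\ne0$)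 is a superpotential: for every $\xi$, $\sum_{(\bar a,\bar c)\in\mathcal C^2,\ \bar a+\bar c=\xi}J(\bar a,\bar c)F_{\bar a}F_{\bar c}$ equals $A_w$ if $\xi=d+w$, $w\in\mathcal W$, and $0$ otherwise. Normalise (by subtracting a constant from $u$) so that $\mathcal C$ lies in the hyperplane $\mathcal H=\{\bar x:\sum\bar x_i=\frac12(n-1)\}$, which also contains $\frac12(d+\mathcal W)$. *)

theory Defs
  imports "HOL-Analysis.Analysis"
begin

text \<open>Vectors in R^r are modelled as real^'r, with 'r a finite index type of size r.\<close>

definition dvec :: "('r::finite \<Rightarrow> nat) \<Rightarrow> real^'r" where
  "dvec d = (\<chi> i. real (d i))"

definition ndim :: "('r::finite \<Rightarrow> nat) \<Rightarrow> nat" where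
  "ndim d = (\<Sum>i\<in>UNIV. d i)"

definition Jform :: "('r::finite \<Rightarrow> nat) \<Rightarrow> real^'r \<Rightarrow> real^'r \<Rightarrow> real" where
  "Jform d p q = (\<Sum>i\<in>UNIV. p$i) * (\<Sum>i\<in>UNIV. q$i) / (real (ndim d) - 1)
                 - (\<Sum>i\<in>UNIV. p$i * q$i / real (d i))"

definition is_null :: "('r::finite \<Rightarrow> nat) \<Rightarrow> real^'r \<Rightarrow> bool" where
  "is_null d x \<longleftrightarrow> Jform d x x = 0"

definition typeI :: "real^'r::finite \<Rightarrow> bool" where
  "typeI w \<longleftrightarrow> (\<exists>i. w$i = -1 \<and> (\<forall>j. j \<noteq> i \<longrightarrow> w$j = 0))"

definition typeII :: "real^'r::finite \<Rightarrow> bool" where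
  "typeII w \<longleftrightarrow> (\<exists>i j k. i \<noteq> j \<and> i \<noteq> k \<and> j \<noteq> k \<and>
      w$i = 1 \<and> w$j = -1 \<and> w$k = -1 \<and> (\<forall>l. l \<notin> {i,j,k} \<longrightarrow> w$l = 0))"

definition typeIII :: "real^'r::finite \<Rightarrow> bool" where
  "typeIII w \<longleftrightarrow> (\<exists>i j. i \<noteq> j \<and> w$i = 1 \<and> w$j = -2 \<and> (\<forall>l. l \<notin> {i,j} \<longrightarrow> w$l = 0))"

definition superpotential ::
  "('r::finite \<Rightarrow> nat) \<Rightarrow> (real^'r) set \<Rightarrow> (real^'r \<Rightarrow> real) \<Rightarrow> (real^'r) set \<Rightarrow> (real^'r \<Rightarrow> real) \<Rightarrow> bool" where
  "superpotential d W A C F \<longleftrightarrow>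
     (\<forall>\<xi>. (\<Sum>(a,c)\<in>{(a,c). a \<in> C \<and> c \<in> C \<and> a + c = \<xi>}. Jform d a c * F a * F c)
          = (if \<xi> - dvec d \<in> W then A (\<xi> - dvec d) else 0))"

definition halfW :: "('r::finite \<Rightarrow> nat) \<Rightarrow> (real^'r) set \<Rightarrow> (real^'r) set" where
  "halfW d W = (\<lambda>w. (1/2) *\<^sub>R (dvec d + w)) ` W"

end

theory Submission
  imports Defs
begin

text \<open>Let \<open>c\<^sub>1\<close> be the element of \<open>C\<close> maximising \<open>h\<close>, ties broken by a
  functional that is injective on \<open>C\<close>. A point \<open>\<xi>\<close> with \<open>h \<xi> > 2\<lambda>\<close> lies outside
  \<open>d + W\<close>, so there the superpotential equation says that the sum of \<open>J(a,c) F\<^sub>a F\<^sub>c\<close>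
  over \<open>a + c = \<xi>\<close> vanishes. At \<open>\<xi> = 2c\<^sub>1\<close> the only decomposition is \<open>c\<^sub>1 + c\<^sub>1\<close>, so
  \<open>c\<^sub>1\<close> is null. If a second element lies above \<open>\<lambda>\<close>, let \<open>c\<^sub>2\<close> be the next one in the
  same order; the equations at \<open>c\<^sub>1 + c\<^sub>2\<close> and \<open>2c\<^sub>2\<close> give \<open>J(c\<^sub>1,c\<^sub>2) = J(c\<^sub>2,c\<^sub>2) = 0\<close>,
  hence \<open>J(c\<^sub>1-c\<^sub>2,c\<^sub>1-c\<^sub>2) = 0\<close>. But \<open>c\<^sub>1 - c\<^sub>2\<close> has coordinate sum zero, where \<open>J\<close> is
  negative definite. The unique element above \<open>\<lambda>\<close> is a vertex of \<open>conv C\<close>, and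
  separating a point from \<open>conv((d + W)/2)\<close> gives the final claim.\<close>

lemma Jform_sym: "Jform d p q = Jform d q p"
  unfolding Jform_def by (simp add: mult.commute)

lemma Jform_add_right: "Jform d x (y + z) = Jform d x y + Jform d x z"
  unfolding Jform_def by (simp add: sum.distrib distrib_left add_divide_distrib algebra_simps)

lemma Jform_diff_right: "Jform d x (y - z) = Jform d x y - Jform d x z"
  unfolding Jform_def by (simp add: sum_subtractf right_diff_distrib diff_divide_distrib algebra_simps)

lemma Jform_diff_left: "Jform d (y - z) x = Jform d y x - Jform d z x"
  by (metis Jform_sym Jform_diff_right)

lemma Jform_neg_definite:
  fixes v :: "real^'r::finite"
  assumes dpos: "\<forall>i. d i > 0" and "(\<Sum>i\<in>UNIV. v$i) = 0" and "v \<noteq> 0"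
  shows "Jform d v v < 0"
proof -
  obtain i where i: "v$i \<noteq> 0" using \<open>v \<noteq> 0\<close> by (metis vec_eq_iff zero_index)
  have "0 < v$i * v$i / real (d i)"
    using i dpos by (intro divide_pos_pos) (auto simp flip: power2_eq_square)
  also have "\<dots> \<le> (\<Sum>j\<in>UNIV. v$j * v$j / real (d j))"
    by (rule member_le_sum) (auto simp: divide_nonneg_pos dpos)
  finally show ?thesis unfolding Jform_def using assms(2) by simp
qed

lemma Jform_null_pair_eq:
  fixes x y :: "real^'r::finite"
  assumes "\<forall>i. d i > 0" and "(\<Sum>i\<in>UNIV. x$i) = (\<Sum>i\<in>UNIV. y$i)"
    and "Jform d x x = 0" "Jform d x y = 0" "Jform d y y = 0"
  shows "x = y"
proof (rule ccontr)
  assume "x \<noteq> y"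
  moreover have "(\<Sum>i\<in>UNIV. (x - y)$i) = 0" using assms(2) by (simp add: sum_subtractf)
  moreover have "Jform d (x - y) (x - y) = 0"
    using assms(3-5) Jform_sym[of d y x] by (simp add: Jform_diff_left Jform_diff_right)
  ultimately show False using Jform_neg_definite[OF assms(1)] by fastforce
qed

lemma ex_inner_nonzero:
  fixes U :: "'a::real_inner set"
  assumes "finite U" "0 \<notin> U"
  shows "\<exists>v. \<forall>u\<in>U. inner v u \<noteq> 0"
  using assms
proof (induction U rule: finite_induct)
  case empty then show ?case by auto
next
  case (insert u U)
  then obtain v where v: "\<forall>u'\<in>U. inner v u' \<noteq> 0" by auto
  show ?case
  proof (cases "inner v u = 0")
    case False then show ?thesis using v by auto
  next
    case True
    \<comment> \<open>Move \<open>v\<close> along \<open>u\<close>, avoiding the finitely many parameters that create a new zero.\<close>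
    let ?bad = "insert 0 ((\<lambda>u'. - inner v u' / inner u u') ` U)"
    obtain t :: real where t: "t \<notin> ?bad"
      using ex_new_if_finite[OF infinite_UNIV_char_0, of ?bad] insert(1) by auto
    have "inner (v + t *\<^sub>R u) u' \<noteq> 0" if "u' \<in> U" for u'
    proof
      assume "inner (v + t *\<^sub>R u) u' = 0"
      then have eq: "inner v u' + t * inner u u' = 0" by (simp add: inner_add_left)
      show False
      proof (cases "inner u u' = 0")
        case True then show False using eq v that by auto
      next
        case False
        then have "t = - inner v u' / inner u u'" using eq by (simp add: field_simps)
        then show False using t that by auto
      qed
    qed
    moreover have "inner (v + t *\<^sub>R u) u \<noteq> 0"
      using t insert(4) True by (simp add: inner_add_left)
    ultimately show ?thesis by blast
  qed
qed

lemma ex_inner_inj_on: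
  fixes C :: "'a::real_inner set"
  assumes "finite C"
  shows "\<exists>v. inj_on (inner v) C"
proof -
  let ?U = "(\<lambda>(x, y). x - y) ` (Sigma C (\<lambda>x. C - {x}))"
  have "finite ?U" using assms by auto
  moreover have "0 \<notin> ?U" by auto
  ultimately obtain v where v: "\<forall>u\<in>?U. inner v u \<noteq> 0" using ex_inner_nonzero by blast
  have "x = y" if "x \<in> C" "y \<in> C" "inner v x = inner v y" for x y
    using v that by (force simp: inner_diff_right)
  then show ?thesis unfolding inj_on_def by blast
qed

definition lex_le :: "real \<times> real \<Rightarrow> real \<times> real \<Rightarrow> bool" where
  "lex_le p q \<longleftrightarrow> fst p < fst q \<or> (fst p = fst q \<and> snd p \<le> snd q)"

lemma lex_le_fst: "lex_le p q \<Longrightarrow> fst p \<le> fst q"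
  unfolding lex_le_def by auto

lemma lex_le_trans: "lex_le p q \<Longrightarrow> lex_le q r \<Longrightarrow> lex_le p r"
  unfolding lex_le_def by auto

lemma lex_le_add_eq:
  assumes "lex_le p q" "lex_le p' q'" "p + p' = q + q'"
  shows "p = q \<and> p' = q'"
proof -
  have "fst p + fst p' = fst q + fst q'" "snd p + snd p' = snd q + snd q'"
    using assms(3) by (metis fst_add, metis snd_add)
  then show ?thesis using assms(1,2) unfolding lex_le_def by (simp add: prod_eq_iff) linarith
qed

lemma ex_lex_max:
  assumes "finite S" "S \<noteq> {}"
  shows "\<exists>c\<in>S. \<forall>a\<in>S. lex_le (f a) (f c)"
  using assms
proof (induction S rule: finite_ne_induct)
  case (singleton x) then show ?case by (simp add: lex_le_def)
next
  case (insert x S)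
  then obtain c where c: "c \<in> S" "\<forall>a\<in>S. lex_le (f a) (f c)" by blast
  show ?case
  proof (cases "lex_le (f x) (f c)")
    case True then show ?thesis using c by auto
  next
    case False
    then have "lex_le (f c) (f x)" unfolding lex_le_def by auto
    then show ?thesis using c by (auto simp: lex_le_def intro: lex_le_trans)
  qed
qed

lemma lex_le_sum_eq_imp_eq:
  assumes add: "\<And>x y. \<psi> (x + y) = \<psi> x + \<psi> y" and inj: "inj_on \<psi> C"
    and "a \<in> C" "b \<in> C" "c \<in> C" "c' \<in> C"
    and "lex_le (\<psi> a) (\<psi> c)" "lex_le (\<psi> b) (\<psi> c')" "a + b = c + c'"
  shows "a = c \<and> b = c'"
  using lex_le_add_eq[of "\<psi> a" "\<psi> c" "\<psi> b" "\<psi> c'"] assms inj_onD[OF inj] by metis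

definition pair_set :: "'a::plus set \<Rightarrow> 'a \<Rightarrow> ('a \<times> 'a) set" where
  "pair_set C \<xi> = {(a, b). a \<in> C \<and> b \<in> C \<and> a + b = \<xi>}"

definition pair_sum ::
  "('r::finite \<Rightarrow> nat) \<Rightarrow> (real^'r \<Rightarrow> real) \<Rightarrow> (real^'r) set \<Rightarrow> real^'r \<Rightarrow> real" where
  "pair_sum d F C \<xi> = (\<Sum>(a, b)\<in>pair_set C \<xi>. Jform d a b * F a * F b)"

lemma finite_pair_set: "finite C \<Longrightarrow> finite (pair_set C \<xi>)"
  unfolding pair_set_def by (rule finite_subset[of _ "C \<times> C"]) auto

lemma superpotential_pair_sum:
  "superpotential d W A C F \<Longrightarrow>
     pair_sum d F C \<xi> = (if \<xi> - dvec d \<in> W then A (\<xi> - dvec d) else 0)"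
  unfolding superpotential_def pair_sum_def pair_set_def by blast

lemma superpotential_pair_sum_above:
  fixes h :: "real^'r::finite \<Rightarrow> real" and lam :: real
  assumes sp: "superpotential d W A C F" and lin: "linear h"
    and hull: "convex hull (halfW d W) \<subseteq> {x. h x < lam}" and "2 * lam < h \<xi>"
  shows "pair_sum d F C \<xi> = 0"
proof -
  have "\<xi> - dvec d \<notin> W"
  proof
    assume "\<xi> - dvec d \<in> W"
    then have "(1/2) *\<^sub>R (dvec d + (\<xi> - dvec d)) \<in> halfW d W"
      unfolding halfW_def by (rule imageI)
    then have "(1/2) *\<^sub>R \<xi> \<in> halfW d W" by simp
    then have "h ((1/2) *\<^sub>R \<xi>) < lam" using hull hull_subset[of "halfW d W" convex] by blast
    then show False using \<open>2 * lam < h \<xi>\<close> by (simp add: linear_scale[OF lin])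
  qed
  then show ?thesis using superpotential_pair_sum[OF sp] by simp
qed

context
  fixes \<psi> :: "real^'r::finite \<Rightarrow> real \<times> real" and C :: "(real^'r) set"
    and d :: "'r \<Rightarrow> nat" and F :: "real^'r \<Rightarrow> real" and c\<^sub>1 :: "real^'r"
  assumes add: "\<And>x y. \<psi> (x + y) = \<psi> x + \<psi> y" and inj: "inj_on \<psi> C"
    and Cfin: "finite C" and Fnz: "\<forall>c\<in>C. F c \<noteq> 0"
    and c\<^sub>1: "c\<^sub>1 \<in> C" "\<forall>a\<in>C. lex_le (\<psi> a) (\<psi> c\<^sub>1)"
begin

lemma pair_sum_top_null:
  assumes "pair_sum d F C (c\<^sub>1 + c\<^sub>1) = 0"
  shows "Jform d c\<^sub>1 c\<^sub>1 = 0"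
proof -
  have "a = c\<^sub>1 \<and> b = c\<^sub>1" if "a \<in> C" "b \<in> C" "a + b = c\<^sub>1 + c\<^sub>1" for a b
    using lex_le_sum_eq_imp_eq[OF add inj that(1,2) c\<^sub>1(1) c\<^sub>1(1)] c\<^sub>1(2) that by blast
  then have "pair_set C (c\<^sub>1 + c\<^sub>1) = {(c\<^sub>1, c\<^sub>1)}"
    using c\<^sub>1(1) unfolding pair_set_def by auto
  then show ?thesis using assms Fnz c\<^sub>1(1) unfolding pair_sum_def by simp
qed

context
  fixes c\<^sub>2 :: "real^'r"
  assumes c\<^sub>2: "c\<^sub>2 \<in> C" "c\<^sub>2 \<noteq> c\<^sub>1" "\<forall>a\<in>C - {c\<^sub>1}. lex_le (\<psi> a) (\<psi> c\<^sub>2)"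
begin

lemma pair_sum_second_orthogonal:
  assumes "pair_sum d F C (c\<^sub>1 + c\<^sub>2) = 0"
  shows "Jform d c\<^sub>1 c\<^sub>2 = 0"
proof -
  have "(a, b) \<in> {(c\<^sub>1, c\<^sub>2), (c\<^sub>2, c\<^sub>1)}" if ab: "a \<in> C" "b \<in> C" "a + b = c\<^sub>1 + c\<^sub>2" for a b
  proof (cases "a = c\<^sub>1")
    case False
    then have "lex_le (\<psi> a) (\<psi> c\<^sub>2)" using c\<^sub>2(3) ab(1) by blast
    moreover have "lex_le (\<psi> b) (\<psi> c\<^sub>1)" using c\<^sub>1(2) ab(2) by blast
    moreover have "a + b = c\<^sub>2 + c\<^sub>1" using ab(3) by (simp add: add.commute)
    ultimately show ?thesis using lex_le_sum_eq_imp_eq[OF add inj ab(1,2) c\<^sub>2(1) c\<^sub>1(1)] by simp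
  qed (use ab(3) in simp)
  then have "pair_set C (c\<^sub>1 + c\<^sub>2) \<subseteq> {(c\<^sub>1, c\<^sub>2), (c\<^sub>2, c\<^sub>1)}"
    unfolding pair_set_def by blast
  moreover have "{(c\<^sub>1, c\<^sub>2), (c\<^sub>2, c\<^sub>1)} \<subseteq> pair_set C (c\<^sub>1 + c\<^sub>2)"
    using c\<^sub>1 c\<^sub>2 by (auto simp: pair_set_def add.commute)
  ultimately have "pair_sum d F C (c\<^sub>1 + c\<^sub>2) = 2 * (Jform d c\<^sub>1 c\<^sub>2 * F c\<^sub>1 * F c\<^sub>2)"
    using c\<^sub>2(2) Jform_sym[of d c\<^sub>2 c\<^sub>1] unfolding pair_sum_def by (simp add: subset_antisym)
  then show ?thesis using assms Fnz c\<^sub>1(1) c\<^sub>2(1) by simp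
qed

lemma pair_sum_second_null:
  assumes "Jform d c\<^sub>1 c\<^sub>1 = 0" "Jform d c\<^sub>1 c\<^sub>2 = 0" "pair_sum d F C (c\<^sub>2 + c\<^sub>2) = 0"
  shows "Jform d c\<^sub>2 c\<^sub>2 = 0"
proof -
  let ?term = "\<lambda>(a, b). Jform d a b * F a * F b"
  \<comment> \<open>The only decompositions of \<open>2c\<^sub>2\<close> besides \<open>c\<^sub>2 + c\<^sub>2\<close> involve \<open>c\<^sub>1\<close> and
      \<open>2c\<^sub>2 - c\<^sub>1\<close>, and \<open>J(c\<^sub>1, 2c\<^sub>2 - c\<^sub>1) = 2J(c\<^sub>1,c\<^sub>2) - J(c\<^sub>1,c\<^sub>1) = 0\<close>.\<close>
  have "?term p = 0" if p: "p \<in> pair_set C (c\<^sub>2 + c\<^sub>2) - {(c\<^sub>2, c\<^sub>2)}" for p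
  proof -
    obtain a b where ab: "p = (a, b)" "a \<in> C" "b \<in> C" "a + b = c\<^sub>2 + c\<^sub>2"
      using p unfolding pair_set_def by auto
    have J0: "Jform d c\<^sub>1 (c\<^sub>2 + c\<^sub>2 - c\<^sub>1) = 0"
      using assms(1,2) by (simp only: Jform_diff_right Jform_add_right)
    have "a = c\<^sub>1 \<or> b = c\<^sub>1"
    proof (rule ccontr)
      assume "\<not> (a = c\<^sub>1 \<or> b = c\<^sub>1)"
      then have "lex_le (\<psi> a) (\<psi> c\<^sub>2)" "lex_le (\<psi> b) (\<psi> c\<^sub>2)" using c\<^sub>2(3) ab(2,3) by auto
      then have "a = c\<^sub>2 \<and> b = c\<^sub>2" using lex_le_sum_eq_imp_eq[OF add inj ab(2,3) c\<^sub>2(1) c\<^sub>2(1)] ab(4) by blast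
      then show False using ab(1) p by simp
    qed
    then have "Jform d a b = 0"
    proof
      assume "a = c\<^sub>1"
      then have "b = c\<^sub>2 + c\<^sub>2 - c\<^sub>1" using ab(4) by (simp add: eq_diff_eq add.commute)
      then show ?thesis using J0 \<open>a = c\<^sub>1\<close> by simp
    next
      assume "b = c\<^sub>1"
      then have "a = c\<^sub>2 + c\<^sub>2 - c\<^sub>1" using ab(4) by (simp add: eq_diff_eq)
      then show ?thesis using J0 \<open>b = c\<^sub>1\<close> Jform_sym[of d c\<^sub>1 "c\<^sub>2 + c\<^sub>2 - c\<^sub>1"] by simp
    qed
    then show ?thesis using ab(1) by simp
  qed
  moreover have "(c\<^sub>2, c\<^sub>2) \<in> pair_set C (c\<^sub>2 + c\<^sub>2)" using c\<^sub>2(1) by (simp add: pair_set_def)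
  ultimately have "pair_sum d F C (c\<^sub>2 + c\<^sub>2) = Jform d c\<^sub>2 c\<^sub>2 * F c\<^sub>2 * F c\<^sub>2"
    unfolding pair_sum_def
    using sum.mono_neutral_right[OF finite_pair_set[OF Cfin], where S = "{(c\<^sub>2, c\<^sub>2)}" and g = ?term]
    by simp
  then show ?thesis using assms(3) Fnz c\<^sub>2(1) by simp
qed

end

end

lemma superpotential_unique_null_above:
  fixes C :: "(real^'r::finite) set" and h :: "real^'r \<Rightarrow> real"
  assumes dpos: "\<forall>i. d i > 0" and Cfin: "finite C" and Fnz: "\<forall>c\<in>C. F c \<noteq> 0"
    and Csum: "\<forall>c\<in>C. (\<Sum>i\<in>UNIV. c$i) = s" and lin: "linear h"
    and vanish: "\<And>\<xi>. 2 * lam < h \<xi> \<Longrightarrow> pair_sum d F C \<xi> = 0"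
    and k: "k \<in> C" "lam < h k"
  shows "{c\<in>C. lam < h c} = {k} \<and> is_null d k"
proof -
  obtain v where v: "inj_on (inner v) C" using ex_inner_inj_on[OF Cfin] by blast
  define \<psi> where "\<psi> x = (h x, inner v x)" for x
  have add: "\<psi> (x + y) = \<psi> x + \<psi> y" for x y
    by (simp add: \<psi>_def linear_add[OF lin] inner_add_right)
  have inj: "inj_on \<psi> C" using v unfolding \<psi>_def inj_on_def by simp
  have above: "lam < h c" if "c \<in> S" "\<forall>a\<in>S. lex_le (\<psi> a) (\<psi> c)" "k' \<in> S" "lam < h k'" for S c k'
    using lex_le_fst[of "\<psi> k'" "\<psi> c"] that unfolding \<psi>_def by fastforce
  have vanish_sum: "pair_sum d F C (x + y) = 0" if "lam < h x" "lam < h y" for x y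
    using vanish that by (simp add: linear_add[OF lin])
  obtain c\<^sub>1 where c\<^sub>1: "c\<^sub>1 \<in> C" "\<forall>a\<in>C. lex_le (\<psi> a) (\<psi> c\<^sub>1)"
    using ex_lex_max[OF Cfin] k(1) by blast
  have hc\<^sub>1: "lam < h c\<^sub>1" using above[OF c\<^sub>1 k] .
  have J11: "Jform d c\<^sub>1 c\<^sub>1 = 0"
    using pair_sum_top_null[OF add inj Cfin Fnz c\<^sub>1 vanish_sum[OF hc\<^sub>1 hc\<^sub>1]] .
  have unique: "c = c\<^sub>1" if c: "c \<in> C" "lam < h c" for c
  proof (rule ccontr)
    assume "c \<noteq> c\<^sub>1"
    then obtain c\<^sub>2 where c\<^sub>2: "c\<^sub>2 \<in> C - {c\<^sub>1}" "\<forall>a\<in>C - {c\<^sub>1}. lex_le (\<psi> a) (\<psi> c\<^sub>2)"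
      using ex_lex_max[of "C - {c\<^sub>1}" \<psi>] Cfin c(1) by blast
    have hc\<^sub>2: "lam < h c\<^sub>2" using above[OF c\<^sub>2 _ c(2)] c(1) \<open>c \<noteq> c\<^sub>1\<close> by blast
    have c\<^sub>2C: "c\<^sub>2 \<in> C" and c\<^sub>2c\<^sub>1: "c\<^sub>2 \<noteq> c\<^sub>1" using c\<^sub>2(1) by auto
    note second = pair_sum_second_orthogonal[OF add inj Cfin Fnz c\<^sub>1 c\<^sub>2C c\<^sub>2c\<^sub>1 c\<^sub>2(2)]
      pair_sum_second_null[OF add inj Cfin Fnz c\<^sub>1 c\<^sub>2C c\<^sub>2c\<^sub>1 c\<^sub>2(2)]
    have J12: "Jform d c\<^sub>1 c\<^sub>2 = 0" using second(1)[OF vanish_sum[OF hc\<^sub>1 hc\<^sub>2]] .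
    have J22: "Jform d c\<^sub>2 c\<^sub>2 = 0" using second(2)[OF J11 J12 vanish_sum[OF hc\<^sub>2 hc\<^sub>2]] .
    have "c\<^sub>1 = c\<^sub>2" using Jform_null_pair_eq[OF dpos _ J11 J12 J22] Csum c\<^sub>1(1) c\<^sub>2C by simp
    then show False using c\<^sub>2c\<^sub>1 by simp
  qed
  then show ?thesis using k J11 unfolding is_null_def by auto
qed

lemma extreme_point_of_convex_hull_strict_max:
  fixes h :: "'a::real_vector \<Rightarrow> real"
  assumes "finite C" "linear h" "c \<in> C" "\<forall>x\<in>C - {c}. h x < h c"
  shows "c extreme_point_of (convex hull C)"
proof -
  have "C - {c} \<subseteq> h -` {..<h c}" using assms(4) by auto
  moreover have "convex (h -` {..<h c})" using convex_linear_vimage[OF assms(2)] by simp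
  ultimately have "convex hull (C - {c}) \<subseteq> h -` {..<h c}" by (rule hull_minimal)
  then have "c \<notin> convex hull (C - {c})" by auto
  then show ?thesis
    using extreme_point_of_convex_hull_insert[of "C - {c}" c] assms(1,3) by (simp add: insert_absorb)
qed

lemma separating_linear_functional:
  fixes S :: "(real^'r::finite) set"
  assumes "finite S" "c \<notin> convex hull S"
  shows "\<exists>(h :: real^'r \<Rightarrow> real) (lam :: real). linear h \<and> convex hull S \<subseteq> {x. h x < lam} \<and> lam < h c"
proof -
  have "closed (convex hull S)"
    using assms(1) by (simp add: compact_imp_closed finite_imp_compact_convex_hull)
  then obtain a b where ab: "inner a c < b" "\<forall>x\<in>convex hull S. b < inner a x"
    using separating_hyperplane_closed_point[OF convex_convex_hull _ assms(2)] by blast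
  have "linear (\<lambda>x. - inner a x)" by (intro linearI) (simp_all add: inner_add_right)
  moreover have "convex hull S \<subseteq> {x. - inner a x < - b}" using ab(2) by auto
  ultimately show ?thesis
    using ab(1) by (intro exI[where x = "\<lambda>x. - inner a x"] exI[where x = "- b"]) simp
qed

lemma superpotential_at_most_one_above:
  fixes C :: "(real^'r::finite) set" and h :: "real^'r \<Rightarrow> real"
  assumes dpos: "\<forall>i. d i > 0" and Cfin: "finite C" and Fnz: "\<forall>c\<in>C. F c \<noteq> 0"
    and sp: "superpotential d W A C F" and Csum: "\<forall>c\<in>C. (\<Sum>i\<in>UNIV. c$i) = s"
    and lin: "linear h" and hull: "convex hull (halfW d W) \<subseteq> {x. h x < lam}"
  shows "card {c\<in>C. lam < h c} \<le> 1 \<and>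
      (\<forall>c\<in>C. lam < h c \<longrightarrow> is_null d c \<and> c extreme_point_of (convex hull C))"
proof -
  have vanish: "pair_sum d F C \<xi> = 0" if "2 * lam < h \<xi>" for \<xi>
    using superpotential_pair_sum_above[OF sp lin hull that] .
  have above: "{c\<in>C. lam < h c} = {k} \<and> is_null d k" if "k \<in> C" "lam < h k" for k
    by (rule superpotential_unique_null_above[OF dpos Cfin Fnz Csum lin]) (use vanish that in auto)
  have "is_null d c \<and> c extreme_point_of (convex hull C)" if "c \<in> C" "lam < h c" for c
  proof -
    have "\<forall>x\<in>C - {c}. h x < h c" using above[OF that] that by force
    then show ?thesis
      using above[OF that] extreme_point_of_convex_hull_strict_max[OF Cfin lin \<open>c \<in> C\<close>] by blast
  qed
  moreover have "card {c\<in>C. lam < h c} \<le> 1"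
    using above Cfin by (auto simp: card_le_Suc0_iff_eq)
  ultimately show ?thesis by blast
qed

theorem proposition3p3:
  fixes d :: "'r::finite \<Rightarrow> nat"
    and W :: "(real^'r) set" and A :: "real^'r \<Rightarrow> real"
    and C :: "(real^'r) set" and F :: "real^'r \<Rightarrow> real"
  assumes r2: "CARD('r) \<ge> 2"
    and dpos: "\<forall>i. d i > 0"
    and Wfin: "finite W"
    and Wtypes: "\<forall>w\<in>W. typeI w \<or> typeII w \<or> typeIII w"
    and Asign: "\<forall>w\<in>W. (typeI w \<longrightarrow> A w > 0) \<and> (\<not> typeI w \<longrightarrow> A w < 0)"
    and Wdim: "aff_dim (convex hull W) = int CARD('r) - 1"
    and Cfin: "finite C"
    and Fnz: "\<forall>c\<in>C. F c \<noteq> 0"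
    and sp: "superpotential d W A C F"
    and Chyp: "\<forall>c\<in>C. (\<Sum>i\<in>UNIV. c$i) = (real (ndim d) - 1) / 2"
  shows "(\<forall>(h :: real^'r \<Rightarrow> real) (lam::real). linear h \<and> convex hull (halfW d W) \<subseteq> {x. h x < lam} \<longrightarrow>
            card {c\<in>C. h c > lam} \<le> 1 \<and>
            (\<forall>c\<in>C. h c > lam \<longrightarrow> is_null d c \<and> c extreme_point_of (convex hull C)))
       \<and> (\<forall>c\<in>C. c \<notin> convex hull (halfW d W) \<longrightarrow> is_null d c \<and> c extreme_point_of (convex hull C))"
proof -
  have "finite (halfW d W)" unfolding halfW_def using Wfin by simp
  then show ?thesis
    using superpotential_at_most_one_above[OF dpos Cfin Fnz sp Chyp] separating_linear_functional
    by blast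
qed

end
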